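(* Let $\lambda_1,\dots,\lambda_n$ be real numbers and set $\lambda_0=\lambda_{n+1}=\infty$. Then $\lambda_i\ge\min(\lambda_{i-1},\lambda_{i+1})$ for every $i\in[n]$ if and only if there exist $x_1,\dots,x_{n-1}\in\mathbb{R}$ such that $\lambda_i=\min(x_i,x_{i-1})$ for every $i\in[n]$, where $x_0=x_n=\infty$. *)

theory Defs
  imports "HOL-Library.Extended_Real"
begin

definition lam_ext :: "nat \<Rightarrow> (nat \<Rightarrow> real) \<Rightarrow> nat \<Rightarrow> ereal" where
  "lam_ext n lam i = (if i = 0 \<or> i = n + 1 then \<infinity> else ereal (lam i))"

definition x_ext :: "nat \<Rightarrow> (nat \<Rightarrow> real) \<Rightarrow> nat \<Rightarrow> ereal" where
  "x_ext n x i = (if i = 0 \<or> i = n then \<infinity> else ereal (x i))"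

end

theory Submission
  imports Defs
begin

text \<open>Take \<open>x i = max (lam i) (lam (i + 1))\<close>; with the infinite boundary values the same
  formula also describes \<open>x 0\<close> and \<open>x n\<close>. Then \<open>min (x i) (x (i - 1))\<close> is the minimum of the
  two neighbouring maxima around \<open>lam i\<close>, which is \<open>lam i\<close> exactly because \<open>lam i\<close> is at least
  one of its neighbours. Conversely, \<open>lam (i - 1) \<le> x (i - 1)\<close> and \<open>lam (i + 1) \<le> x i\<close>, so
  the smaller neighbour is at most \<open>min (x i) (x (i - 1)) = lam i\<close>.\<close>

lemma min_max_neighbours_eq:
  fixes a b c :: "'a::linorder"
  assumes "min b c \<le> a"
  shows "min (max a c) (max b a) = a"
proof -
  from assms have "b \<le> a \<or> c \<le> a"
    by (simp add: min_le_iff_disj)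
  then show ?thesis
  proof
    assume "b \<le> a"
    then have "max b a = a" by (simp add: max_def)
    then show ?thesis by (simp add: min_absorb2)
  next
    assume "c \<le> a"
    then have "max a c = a" by (simp add: max_def)
    then show ?thesis by (simp add: min_absorb1)
  qed
qed

lemma min_le_if_eq_min:
  fixes a b c y z :: "'a::linorder"
  assumes "a = min y z" and "b \<le> z" and "c \<le> y"
  shows "min b c \<le> a"
  using assms by (auto simp: min_def)

lemma lam_ext_inner: "i \<in> {1..n} \<Longrightarrow> lam_ext n lam i = ereal (lam i)"
  by (simp add: lam_ext_def)

lemma x_ext_neighbour_max:
  assumes "i \<le> n"
  shows "x_ext n (\<lambda>j. max (lam j) (lam (j + 1))) i = max (lam_ext n lam i) (lam_ext n lam (i + 1))"
  using assms by (auto simp: x_ext_def lam_ext_def)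

lemma
  assumes rep: "\<forall>i\<in>{1..n}. ereal (lam i) = min (x_ext n x i) (x_ext n x (i - 1))"
    and "i \<le> n"
  shows lam_ext_le_x_ext: "lam_ext n lam i \<le> x_ext n x i"
    and lam_ext_Suc_le_x_ext: "lam_ext n lam (i + 1) \<le> x_ext n x i"
proof -
  show "lam_ext n lam i \<le> x_ext n x i"
  proof (cases "i = 0 \<or> i = n")
    case False
    then have "ereal (lam i) = min (x_ext n x i) (x_ext n x (i - 1))"
      using rep \<open>i \<le> n\<close> by auto
    with False \<open>i \<le> n\<close> show ?thesis by (simp add: lam_ext_def)
  qed (auto simp: lam_ext_def x_ext_def)
  show "lam_ext n lam (i + 1) \<le> x_ext n x i"
  proof (cases "i = n")
    case False
    then have "ereal (lam (i + 1)) = min (x_ext n x (i + 1)) (x_ext n x i)"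
      using rep \<open>i \<le> n\<close> by auto
    with False \<open>i \<le> n\<close> show ?thesis by (simp add: lam_ext_def)
  qed (simp add: x_ext_def)
qed

theorem lemma8p1:
  fixes n :: nat and lam :: "nat \<Rightarrow> real"
  shows "(\<forall>i\<in>{1..n}. lam_ext n lam i \<ge> min (lam_ext n lam (i - 1)) (lam_ext n lam (i + 1)))
     \<longleftrightarrow> (\<exists>x :: nat \<Rightarrow> real. \<forall>i\<in>{1..n}. ereal (lam i) = min (x_ext n x i) (x_ext n x (i - 1)))"
proof
  assume no_strict_min: "\<forall>i\<in>{1..n}. lam_ext n lam i \<ge> min (lam_ext n lam (i - 1)) (lam_ext n lam (i + 1))"
  let ?x = "\<lambda>j. max (lam j) (lam (j + 1))"
  have "ereal (lam i) = min (x_ext n ?x i) (x_ext n ?x (i - 1))" if "i \<in> {1..n}" for i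
  proof -
    have "ereal (lam i) = lam_ext n lam i"
      using that by (simp add: lam_ext_inner)
    also have "\<dots> = min (max (lam_ext n lam i) (lam_ext n lam (i + 1)))
                         (max (lam_ext n lam (i - 1)) (lam_ext n lam i))"
      using no_strict_min that by (simp add: min_max_neighbours_eq)
    also have "\<dots> = min (x_ext n ?x i) (x_ext n ?x (i - 1))"
      using that x_ext_neighbour_max[of i n lam] x_ext_neighbour_max[of "i - 1" n lam] by auto
    finally show ?thesis .
  qed
  then show "\<exists>x. \<forall>i\<in>{1..n}. ereal (lam i) = min (x_ext n x i) (x_ext n x (i - 1))"
    by blast
next
  assume "\<exists>x. \<forall>i\<in>{1..n}. ereal (lam i) = min (x_ext n x i) (x_ext n x (i - 1))"
  then obtain x where rep: "\<forall>i\<in>{1..n}. ereal (lam i) = min (x_ext n x i) (x_ext n x (i - 1))"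
    by blast
  show "\<forall>i\<in>{1..n}. lam_ext n lam i \<ge> min (lam_ext n lam (i - 1)) (lam_ext n lam (i + 1))"
  proof
    fix i assume i: "i \<in> {1..n}"
    show "min (lam_ext n lam (i - 1)) (lam_ext n lam (i + 1)) \<le> lam_ext n lam i"
    proof (rule min_le_if_eq_min)
      show "lam_ext n lam i = min (x_ext n x i) (x_ext n x (i - 1))"
        using rep i by (simp add: lam_ext_inner)
      show "lam_ext n lam (i - 1) \<le> x_ext n x (i - 1)"
        using lam_ext_le_x_ext[OF rep, of "i - 1"] i by auto
      show "lam_ext n lam (i + 1) \<le> x_ext n x i"
        using lam_ext_Suc_le_x_ext[OF rep, of i] i by simp
    qed
  qed
qed

end
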